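(* There exists a topologically regular compact connected set $K\subseteq\mathbb{R}^2$ whose interior $\mathring K$ is not Whitney regular but such that $C^1_{\mathrm{int}}(K)=C^1(K)=C^1(\mathbb{R}^2|K)$. (For instance, $K=\overline\Omega$ where $\Omega$ is the open unit disc from which pairwise disjoint small closed balls accumulating exactly at the segment $\{0\}\times[-\tfrac12,\tfrac12]$ are removed.)
   Context: $K$ is topologically regular if it is the closure of its interior $\mathring K$. A set $S$ is Whitney regular if there is $C>0$ such that any two points $x,y\in S$ can be joined by a rectifiable path in $S$ of length at most $C|x-y|$. $C^1_{\mathrm{int}}(K)$ is the set of $f\in C^1(\mathring K)$ such that $f$ and $df$ extend continuously to $K$ (identified with these extensions). $C^1(K)$ is the set of $f:K\to\mathbb{R}$ admitting a continuous $df:K\to\mathbb{R}^2$ with $\lim_{y\to x,\,y\in K\setminus\{x\}}\frac{f(y)-f(x)-\langle df(x),y-x\rangle}{|y-x|}=0$ for all $x\in K$. $C^1(\mathbb{R}^2|K)=\{g|_K:g\in C^1(\mathbb{R}^2)\}$. *)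

theory Defs
  imports "HOL-Analysis.Analysis"
begin

definition topologically_regular :: "(real^2) set \<Rightarrow> bool" where
  "topologically_regular K \<longleftrightarrow> closure (interior K) = K"

definition variation_sums :: "(real \<Rightarrow> real^2) \<Rightarrow> real set" where
  "variation_sums g = {(\<Sum>i<n. norm (g (t (Suc i)) - g (t i))) | t n.
      t 0 = 0 \<and> t n = 1 \<and> (\<forall>i<n. t i \<le> t (Suc i))}"

definition rectifiable_path :: "(real \<Rightarrow> real^2) \<Rightarrow> bool" where
  "rectifiable_path g \<longleftrightarrow> path g \<and> bdd_above (variation_sums g)"

definition path_length :: "(real \<Rightarrow> real^2) \<Rightarrow> real" where
  "path_length g = Sup (variation_sums g)"

definition whitney_regular :: "(real^2) set \<Rightarrow> bool" where
  "whitney_regular S \<longleftrightarrow> (\<exists>C>0. \<forall>x\<in>S. \<forall>y\<in>S. \<exists>g. rectifiable_path g \<and>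
      path_image g \<subseteq> S \<and> pathstart g = x \<and> pathfinish g = y \<and>
      path_length g \<le> C * dist x y)"

text \<open>f (considered on K) belongs to C^1_int(K): f is C^1 on the interior, and f and df
  extend continuously to K (f is identified with its extension).\<close>
definition C1_int :: "(real^2) set \<Rightarrow> (real^2 \<Rightarrow> real) \<Rightarrow> bool" where
  "C1_int K f \<longleftrightarrow> (\<exists>df :: real^2 \<Rightarrow> real^2.
      (\<forall>x\<in>interior K. (f has_derivative (\<lambda>h. df x \<bullet> h)) (at x)) \<and>
      continuous_on K f \<and> continuous_on K df)"

definition C1_on :: "(real^2) set \<Rightarrow> (real^2 \<Rightarrow> real) \<Rightarrow> bool" where
  "C1_on K f \<longleftrightarrow> (\<exists>df :: real^2 \<Rightarrow> real^2. continuous_on K df \<and>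
      (\<forall>x\<in>K. ((\<lambda>y. (f y - f x - df x \<bullet> (y - x)) / norm (y - x)) \<longlongrightarrow> 0)
                (at x within K)))"

definition C1_ext :: "(real^2) set \<Rightarrow> (real^2 \<Rightarrow> real) \<Rightarrow> bool" where
  "C1_ext K f \<longleftrightarrow> (\<exists>g :: real^2 \<Rightarrow> real. \<exists>dg :: real^2 \<Rightarrow> real^2.
      (\<forall>x. (g has_derivative (\<lambda>h. dg x \<bullet> h)) (at x)) \<and> continuous_on UNIV dg \<and>
      (\<forall>x\<in>K. g x = f x))"

end

theory Submission
  imports Defs
begin

text \<open>The witness is the bowtie: the two closed quarters of the unit disc lying in the first and
  third quadrants. They touch only at the origin, so the interior is disconnected and hence not
  Whitney regular. Each quarter is convex with nonempty interior, so by the mean value theorem a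
  function that is \<open>C\<^sup>1\<close> inside with a continuous gradient up to the boundary is Whitney
  differentiable on each quarter, hence on the bowtie. To extend a Whitney \<open>C\<^sup>1\<close> function, fill
  the two empty quadrants by Hestenes reflections across the two axes, blended by an angular
  cutoff; the gradient of the cutoff grows only like \<open>1/|x|\<close> at the origin, and this is absorbed
  because both reflections agree with the function to first order there. Finally, a reflection in
  the unit circle extends from the closed disc to the plane.\<close>

definition C1_gradient_on :: "'a::real_inner set \<Rightarrow> ('a \<Rightarrow> real) \<Rightarrow> ('a \<Rightarrow> 'a) \<Rightarrow> bool" where
  "C1_gradient_on S f df \<longleftrightarrow>
     continuous_on S df \<and> (\<forall>x\<in>S. (f has_derivative (\<lambda>h. df x \<bullet> h)) (at x within S))"

lemma has_derivative_within_closed_Un: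
  assumes "closed S" "closed T" "bounded_linear f'"
    and "x \<in> S \<Longrightarrow> (f has_derivative f') (at x within S)"
    and "x \<in> T \<Longrightarrow> (f has_derivative f') (at x within T)"
  shows "(f has_derivative f') (at x within S \<union> T)"
proof -
  have trivial: "(f has_derivative f') (at x within U)" if "closed U" "x \<notin> U" for U
  proof -
    have "at x within U = bot" using that by (simp add: not_in_closure_trivial_limitI)
    then show ?thesis by (simp add: has_derivative_def assms(3))
  qed
  have "(f has_derivative f') (at x within S)" "(f has_derivative f') (at x within T)"
    using assms trivial by blast+
  then show ?thesis
    unfolding has_derivative_within_alt2 by (auto simp: at_within_union eventually_sup)
qed

lemma C1_gradient_on_closed_Un:
  assumes "closed S" "closed T" "C1_gradient_on S f df" "C1_gradient_on T f df"
  shows "C1_gradient_on (S \<union> T) f df"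
  unfolding C1_gradient_on_def
proof (intro conjI ballI)
  show "continuous_on (S \<union> T) df"
    using assms by (intro continuous_on_closed_Un) (auto simp: C1_gradient_on_def)
  show "(f has_derivative (\<lambda>h. df x \<bullet> h)) (at x within S \<union> T)" for x
    using assms by (intro has_derivative_within_closed_Un bounded_linear_inner_right)
      (auto simp: C1_gradient_on_def)
qed

lemma C1_gradient_on_subset: "C1_gradient_on T f df \<Longrightarrow> S \<subseteq> T \<Longrightarrow> C1_gradient_on S f df"
  unfolding C1_gradient_on_def by (auto intro: continuous_on_subset has_derivative_subset)

lemma C1_gradient_on_cong:
  assumes "C1_gradient_on S f df" "\<And>x. x \<in> S \<Longrightarrow> g x = f x" "\<And>x. x \<in> S \<Longrightarrow> dg x = df x"
  shows "C1_gradient_on S g dg"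
  unfolding C1_gradient_on_def
proof
  show "continuous_on S dg" using assms continuous_on_cong[of S S dg df] by (auto simp: C1_gradient_on_def)
  show "\<forall>x\<in>S. (g has_derivative (\<lambda>h. dg x \<bullet> h)) (at x within S)"
  proof
    fix x assume x: "x \<in> S"
    have "(f has_derivative (\<lambda>h. df x \<bullet> h)) (at x within S)"
      using assms x by (auto simp: C1_gradient_on_def)
    then have "(g has_derivative (\<lambda>h. df x \<bullet> h)) (at x within S)"
      by (rule has_derivative_transform_within[where d=1]) (use x assms in auto)
    then show "(g has_derivative (\<lambda>h. dg x \<bullet> h)) (at x within S)" using assms x by simp
  qed
qed

lemma C1_on_iff_C1_gradient_on: "C1_on K f \<longleftrightarrow> (\<exists>df. C1_gradient_on K f df)"
proof -
  have "((\<lambda>y. (f y - f x - df x \<bullet> (y - x)) / norm (y - x)) \<longlongrightarrow> 0) (at x within K)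
     \<longleftrightarrow> (f has_derivative (\<lambda>h. df x \<bullet> h)) (at x within K)" for x and df :: "real^2 \<Rightarrow> real^2"
    by (simp add: has_derivative_within bounded_linear_inner_right divide_inverse algebra_simps)
  then show ?thesis unfolding C1_on_def C1_gradient_on_def by blast
qed

lemma C1_ext_iff_C1_gradient_on_UNIV:
  "C1_ext K f \<longleftrightarrow> (\<exists>g dg. C1_gradient_on UNIV g dg \<and> (\<forall>x\<in>K. g x = f x))"
  unfolding C1_ext_def C1_gradient_on_def by auto

lemma C1_ext_imp_C1_on:
  assumes "C1_ext K f" shows "C1_on K f"
proof -
  obtain g dg where g: "C1_gradient_on UNIV g dg" "\<And>x. x \<in> K \<Longrightarrow> g x = f x"
    using assms unfolding C1_ext_iff_C1_gradient_on_UNIV by blast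
  have "C1_gradient_on K g dg" by (rule C1_gradient_on_subset[OF g(1)]) simp
  then have "C1_gradient_on K f dg" by (rule C1_gradient_on_cong) (simp_all add: g(2))
  then show ?thesis unfolding C1_on_iff_C1_gradient_on by blast
qed

lemma C1_on_imp_C1_int:
  assumes "C1_on K f" shows "C1_int K f"
proof -
  obtain df where df: "C1_gradient_on K f df" using assms unfolding C1_on_iff_C1_gradient_on by blast
  then have der: "\<And>x. x \<in> K \<Longrightarrow> (f has_derivative (\<lambda>h. df x \<bullet> h)) (at x within K)"
    by (simp add: C1_gradient_on_def)
  have "(f has_derivative (\<lambda>h. df x \<bullet> h)) (at x)" if "x \<in> interior K" for x
    using der[of x] at_within_interior[OF that] that interior_subset[of K] by auto
  moreover have "continuous_on K f" using der by (rule has_derivative_continuous_on)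
  moreover have "continuous_on K df" using df by (simp add: C1_gradient_on_def)
  ultimately show ?thesis unfolding C1_int_def by blast
qed

section \<open>Functions that are C1 up to the boundary of a convex set\<close>

lemma convex_Int_ball_subset_closure_interior:
  fixes A :: "'a::euclidean_space set"
  assumes "convex A" "x \<in> closure (interior A)" "0 < d"
  shows "A \<inter> ball x d \<subseteq> closure (interior A \<inter> ball x d)"
proof -
  obtain z where "z \<in> interior A" "dist z x < d"
    using assms(2,3) closure_approachable by blast
  then have nonempty: "interior (A \<inter> ball x d) \<noteq> {}" by (auto simp: interior_open dist_commute)
  have "convex (A \<inter> ball x d)" using assms(1) by (simp add: convex_Int)
  then have "closure (interior (A \<inter> ball x d)) = closure (A \<inter> ball x d)"
    using nonempty by (rule convex_closure_interior)
  then show ?thesis by (simp add: interior_open closure_subset)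
qed

text \<open>By the mean value theorem \<open>f - df x \<bullet> _\<close> is \<open>e\<close>-Lipschitz on the interior points near \<open>x\<close>,
  and by convexity these are dense in the points of \<open>A\<close> near \<open>x\<close>.\<close>
lemma has_derivative_within_convex_from_interior:
  fixes f :: "'a::euclidean_space \<Rightarrow> real"
  assumes A: "convex A" "closed A" "interior A \<noteq> {}"
    and der: "\<And>z. z \<in> interior A \<Longrightarrow> (f has_derivative (\<lambda>h. df z \<bullet> h)) (at z)"
    and cont: "continuous_on A f" "continuous_on A df" and x: "x \<in> A"
  shows "(f has_derivative (\<lambda>h. df x \<bullet> h)) (at x within A)"
  unfolding has_derivative_within_alt
proof (intro conjI allI impI bounded_linear_inner_right)
  fix e :: real assume "e > 0"
  then obtain d where d: "d > 0" "\<And>z. z \<in> A \<Longrightarrow> dist z x < d \<Longrightarrow> dist (df z) (df x) < e"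
    using cont(2) x unfolding continuous_on_iff by blast
  define S where "S = interior A \<inter> ball x d"
  define \<phi> where "\<phi> z = f z - df x \<bullet> z" for z
  have "e-lipschitz_on S \<phi>"
  proof (rule lipschitz_onI)
    fix y z assume "y \<in> S" "z \<in> S"
    have "convex S" unfolding S_def by (intro convex_Int convex_interior A(1) convex_ball)
    then have "norm (\<phi> y - \<phi> z) \<le> e * norm (y - z)"
    proof (rule differentiable_bound[OF _ _ _ \<open>y \<in> S\<close> \<open>z \<in> S\<close>])
      fix w assume w: "w \<in> S"
      then have "(f has_derivative (\<lambda>h. df w \<bullet> h)) (at w within S)"
        using der by (auto simp: S_def intro: has_derivative_at_withinI)
      then show "(\<phi> has_derivative (\<lambda>h. (df w - df x) \<bullet> h)) (at w within S)"
        unfolding \<phi>_def by (auto intro!: derivative_eq_intros simp: inner_diff_left)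
      have "w \<in> A" "dist w x < d" using w interior_subset by (auto simp: S_def dist_commute)
      then have "norm (df w - df x) \<le> e" using d(2) by (force simp: dist_norm)
      moreover have "onorm (\<lambda>h. (df w - df x) \<bullet> h) \<le> norm (df w - df x)"
        using onorm_inner_right[OF bounded_linear_ident, of "df w - df x"] by (simp add: onorm_id)
      ultimately show "onorm (\<lambda>h. (df w - df x) \<bullet> h) \<le> e" by linarith
    qed
    then show "dist (\<phi> y) (\<phi> z) \<le> e * dist y z" by (simp add: dist_norm)
  qed (use \<open>e > 0\<close> in simp)
  moreover have "closure S \<subseteq> A"
    using A(2) by (intro closure_minimal) (auto simp: S_def interior_subset[THEN subsetD])
  then have "continuous_on (closure S) \<phi>"
    unfolding \<phi>_def by (intro continuous_intros continuous_on_subset[OF cont(1)])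
  ultimately have lipschitz: "e-lipschitz_on (closure S) \<phi>"
    by (rule lipschitz_on_closure)
  have "x \<in> closure (interior A)" using convex_closure_interior[OF A(1,3)] A(2) x by simp
  then have near_x: "A \<inter> ball x d \<subseteq> closure S"
    unfolding S_def by (rule convex_Int_ball_subset_closure_interior[OF A(1) _ d(1)])
  show "\<exists>d>0. \<forall>y\<in>A. norm (y - x) < d \<longrightarrow> norm (f y - f x - df x \<bullet> (y - x)) \<le> e * norm (y - x)"
  proof (intro exI[of _ d] conjI ballI impI d(1))
    fix y assume "y \<in> A" "norm (y - x) < d"
    then have "y \<in> closure S" "x \<in> closure S"
      using near_x x d(1) by (auto simp: dist_norm norm_minus_commute)
    then have "dist (\<phi> y) (\<phi> x) \<le> e * dist y x" by (rule lipschitz_onD[OF lipschitz])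
    moreover have "\<phi> y - \<phi> x = f y - f x - df x \<bullet> (y - x)"
      by (simp add: \<phi>_def inner_diff_right)
    ultimately show "norm (f y - f x - df x \<bullet> (y - x)) \<le> e * norm (y - x)"
      by (simp add: dist_norm)
  qed
qed

lemma topologically_regular_convex_Un:
  assumes "convex A" "convex B" "closed A" "closed B" "interior A \<noteq> {}" "interior B \<noteq> {}"
  shows "topologically_regular (A \<union> B)"
  unfolding topologically_regular_def
proof
  show "closure (interior (A \<union> B)) \<subseteq> A \<union> B"
    using assms by (intro closure_minimal interior_subset closed_Un)
  have "A = closure (interior A)" "B = closure (interior B)"
    using assms convex_closure_interior closure_closed by metis+
  then show "A \<union> B \<subseteq> closure (interior (A \<union> B))"
    by (metis Un_least closure_mono interior_mono sup.cobounded1 sup.cobounded2)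
qed

lemma C1_int_imp_C1_on_convex_Un:
  assumes convex: "convex A" "convex B" and closed: "closed A" "closed B"
    and interior: "interior A \<noteq> {}" "interior B \<noteq> {}" and f: "C1_int (A \<union> B) f"
  shows "C1_on (A \<union> B) f"
proof -
  obtain df where der: "\<And>x. x \<in> interior (A \<union> B) \<Longrightarrow> (f has_derivative (\<lambda>h. df x \<bullet> h)) (at x)"
    and cont: "continuous_on (A \<union> B) f" "continuous_on (A \<union> B) df"
    using f unfolding C1_int_def by blast
  have piece: "(f has_derivative (\<lambda>h. df x \<bullet> h)) (at x within C)"
    if "C \<subseteq> A \<union> B" "convex C" "closed C" "interior C \<noteq> {}" "x \<in> C" for C x
  proof (rule has_derivative_within_convex_from_interior[OF that(2-4) _ _ _ that(5)])
    show "(f has_derivative (\<lambda>h. df z \<bullet> h)) (at z)" if "z \<in> interior C" for z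
      using der interior_mono[OF \<open>C \<subseteq> A \<union> B\<close>] that by blast
    show "continuous_on C f" "continuous_on C df"
      using cont continuous_on_subset[OF _ \<open>C \<subseteq> A \<union> B\<close>] by blast+
  qed
  have "C1_gradient_on (A \<union> B) f df"
    unfolding C1_gradient_on_def
    using cont closed convex interior piece[of A] piece[of B]
    by (auto intro!: has_derivative_within_closed_Un bounded_linear_inner_right)
  then show ?thesis by (auto simp: C1_on_iff_C1_gradient_on)
qed

lemma whitney_regular_imp_connected: "whitney_regular S \<Longrightarrow> connected S"
  unfolding whitney_regular_def rectifiable_path_def
  by (intro path_connected_imp_connected) (force simp: path_connected_def)

section \<open>Extension across the unit sphere\<close>

lemma has_derivative_inverse_inner_power_scaleR:
  fixes x :: "'a::real_inner"
  assumes "x \<noteq> 0"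
  shows "((\<lambda>y. inverse ((y \<bullet> y) ^ n) *\<^sub>R y) has_derivative
     (\<lambda>v. inverse ((x \<bullet> x) ^ n) *\<^sub>R v - (2 * real n * (x \<bullet> v) / (x \<bullet> x) ^ Suc n) *\<^sub>R x)) (at x)"
  using assms
  apply (auto intro!: derivative_eq_intros ext)
  apply (simp add: field_simps inner_commute power2_eq_square)
  apply (cases n; simp)
  done

lemma norm_inverse_inner_power_scaleR_le_1:
  fixes x :: "'a::real_inner"
  assumes "1 \<le> norm x" "n \<noteq> 0"
  shows "norm (inverse ((x \<bullet> x) ^ n) *\<^sub>R x) \<le> 1"
proof -
  have "norm x \<le> norm x ^ (2 * n)"
    using assms by (intro self_le_power) auto
  moreover have "norm (inverse ((x \<bullet> x) ^ n) *\<^sub>R x) = norm x / norm x ^ (2 * n)"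
    by (simp add: power2_norm_eq_inner[symmetric] divide_inverse power_mult)
  ultimately show ?thesis using assms(1) by (simp add: divide_le_eq_1)
qed

text \<open>Outside the unit ball put \<open>2 h(x/|x|\<^sup>2) - h(x/|x|\<^sup>4)\<close>: both inversions fix the unit
  sphere, and the coefficients make the radial derivatives agree there.\<close>
lemma C1_gradient_on_extend_from_unit_ball:
  fixes h :: "'a::real_inner \<Rightarrow> real"
  assumes h: "C1_gradient_on (cball 0 1) h dh"
  shows "\<exists>g dg. C1_gradient_on UNIV g dg \<and> (\<forall>x\<in>cball 0 1. g x = h x)"
proof -
  define T where "T = {x::'a. 1 \<le> norm x}"
  define p where "p = (\<lambda>n (x::'a). inverse ((x \<bullet> x) ^ n) *\<^sub>R x)"
  define adj where "adj = (\<lambda>n (x::'a) w. inverse ((x \<bullet> x) ^ n) *\<^sub>R w - (2 * real n * (w \<bullet> x) / (x \<bullet> x) ^ Suc n) *\<^sub>R x)"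
  define G where "G = (\<lambda>x. 2 * h (p 1 x) - h (p 2 x))"
  define dG where "dG = (\<lambda>x. 2 *\<^sub>R adj 1 x (dh (p 1 x)) - adj 2 x (dh (p 2 x)))"
  have dh_cont: "continuous_on (cball 0 1) dh"
    and h_der: "\<And>y. y \<in> cball 0 1 \<Longrightarrow> (h has_derivative (\<lambda>v. dh y \<bullet> v)) (at y within cball 0 1)"
    using h by (auto simp: C1_gradient_on_def)
  have p_T: "p n ` T \<subseteq> cball 0 1" if "n \<noteq> 0" for n
    using norm_inverse_inner_power_scaleR_le_1 that by (auto simp: p_def T_def)
  have T_nonzero: "x \<bullet> x \<noteq> 0" if "x \<in> T" for x
    using that by (auto simp: T_def)
  have hp_der: "((\<lambda>x. h (p n x)) has_derivative (\<lambda>v. adj n x (dh (p n x)) \<bullet> v)) (at x within T)"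
    if "x \<in> T" "n \<noteq> 0" for x n
  proof -
    have "x \<noteq> 0" using T_nonzero[OF that(1)] by auto
    from has_derivative_inverse_inner_power_scaleR[OF this, of n]
    have "(p n has_derivative (\<lambda>v. inverse ((x \<bullet> x) ^ n) *\<^sub>R v - (2 * real n * (x \<bullet> v) / (x \<bullet> x) ^ Suc n) *\<^sub>R x))
        (at x within T)"
      unfolding p_def by (rule has_derivative_at_withinI)
    from has_derivative_in_compose2[OF h_der p_T[OF that(2)] that(1) this]
    show ?thesis by (simp add: adj_def inner_diff_left inner_diff_right inner_commute algebra_simps)
  qed
  have G_C1: "C1_gradient_on T G dG"
    unfolding C1_gradient_on_def
  proof
    have "continuous_on T (p n)" for n
      unfolding p_def by (intro continuous_intros) (use T_nonzero in auto)
    then have "continuous_on T (\<lambda>x. dh (p n x))" if "n \<noteq> 0" for n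
      using continuous_on_compose2[OF dh_cont] p_T[OF that] by blast
    then show "continuous_on T dG" unfolding dG_def adj_def
      by (intro continuous_intros) (use T_nonzero in auto)
    show "\<forall>x\<in>T. (G has_derivative (\<lambda>v. dG x \<bullet> v)) (at x within T)"
      using hp_der unfolding G_def dG_def
      by (auto intro!: derivative_eq_intros simp: inner_diff_left)
  qed
  define g where "g = (\<lambda>x::'a. if norm x \<le> 1 then h x else G x)"
  define dg where "dg = (\<lambda>x::'a. if norm x \<le> 1 then dh x else dG x)"
  have sphere: "p n x = x" "x \<bullet> x = 1" if "norm x = 1" for n x
    using that by (auto simp: p_def power2_norm_eq_inner[symmetric])
  have "C1_gradient_on T g dg"
  proof (rule C1_gradient_on_cong[OF G_C1])
    fix x assume x: "x \<in> T"
    have "g x = G x \<and> dg x = dG x"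
    proof (cases "norm x \<le> 1")
      case True then have "norm x = 1" using x by (auto simp: T_def)
      then show ?thesis by (simp add: g_def G_def dg_def dG_def adj_def sphere algebra_simps scaleR_2)
    qed (simp add: g_def dg_def)
    then show "g x = G x" "dg x = dG x" by simp_all
  qed
  moreover have "C1_gradient_on (cball 0 1) g dg"
    by (rule C1_gradient_on_cong[OF h]) (auto simp: g_def dg_def)
  moreover have "closed T" unfolding T_def by (intro closed_Collect_le continuous_intros)
  ultimately have "C1_gradient_on (cball 0 1 \<union> T) g dg"
    by (intro C1_gradient_on_closed_Un) auto
  moreover have "cball 0 1 \<union> T = UNIV" by (auto simp: T_def)
  ultimately show ?thesis by (intro exI[of _ g] exI[of _ dg]) (auto simp: g_def)
qed

lemma has_derivative_convex_combination:
  fixes F1 F2 :: "'a::real_normed_vector \<Rightarrow> real"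
  assumes d1: "(F1 has_derivative L) (at x within S)" and d2: "(F2 has_derivative L) (at x within S)"
    and eq: "F1 x = F2 x" and w: "\<And>y. 0 \<le> w y" "\<And>y. w y \<le> 1"
  shows "((\<lambda>y. w y * F1 y + (1 - w y) * F2 y) has_derivative L) (at x within S)"
  unfolding has_derivative_within_alt2
proof (intro conjI allI impI)
  show "bounded_linear L" using d1 by (simp add: has_derivative_def)
  fix e :: real assume e: "e > 0"
  have "\<forall>\<^sub>F y in at x within S. norm (F1 y - F1 x - L (y - x)) \<le> e * norm (y - x)"
       "\<forall>\<^sub>F y in at x within S. norm (F2 y - F2 x - L (y - x)) \<le> e * norm (y - x)"
    using d1 d2 e unfolding has_derivative_within_alt2 by blast+
  then show "\<forall>\<^sub>F y in at x within S.
      norm (w y * F1 y + (1 - w y) * F2 y - (w x * F1 x + (1 - w x) * F2 x) - L (y - x)) \<le> e * norm (y - x)"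
  proof eventually_elim
    case (elim y)
    have "w y * F1 y + (1 - w y) * F2 y - (w x * F1 x + (1 - w x) * F2 x) - L (y - x)
        = w y * (F1 y - F1 x - L (y - x)) + (1 - w y) * (F2 y - F2 x - L (y - x))"
      using eq by (simp add: algebra_simps)
    also have "\<bar>\<dots>\<bar> \<le> w y * \<bar>F1 y - F1 x - L (y - x)\<bar> + (1 - w y) * \<bar>F2 y - F2 x - L (y - x)\<bar>"
      using w[of y] by (metis abs_mult abs_of_nonneg abs_triangle_ineq diff_ge_0_iff_ge)
    also have "\<dots> \<le> w y * (e * norm (y - x)) + (1 - w y) * (e * norm (y - x))"
      using elim w[of y] by (intro add_mono mult_left_mono) auto
    finally show ?case by (simp add: algebra_simps)
  qed
qed

text \<open>The weight \<open>w\<close> may have a gradient of size \<open>1/|y|\<close> at \<open>0\<close>; this is compensated by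
  \<open>F1 - F2 = o(|y|)\<close>.\<close>
lemma tendsto_blended_gradient:
  fixes F1 F2 :: "'a::real_inner \<Rightarrow> real" and G1 G2 dw :: "'a \<Rightarrow> 'a"
  assumes g1: "(G1 \<longlongrightarrow> d) (at 0 within S)" and g2: "(G2 \<longlongrightarrow> d) (at 0 within S)"
    and f1: "(F1 has_derivative (\<lambda>v. d \<bullet> v)) (at 0 within S)"
    and f2: "(F2 has_derivative (\<lambda>v. d \<bullet> v)) (at 0 within S)"
    and eq: "F1 0 = F2 0" and w: "\<And>y. 0 \<le> w y" "\<And>y. w y \<le> 1"
    and B: "\<And>y. norm (dw y) * norm y \<le> B"
  shows "((\<lambda>y. w y *\<^sub>R G1 y + (1 - w y) *\<^sub>R G2 y + (F1 y - F2 y) *\<^sub>R dw y) \<longlongrightarrow> d) (at 0 within S)"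
  unfolding tendsto_iff
proof (intro allI impI)
  fix e :: real assume e: "e > 0"
  have B0: "0 \<le> B" using B[of 0] by simp
  define e' where "e' = e / (6 * (B + 1))"
  have e': "e' > 0" using e B0 by (simp add: e'_def)
  have "\<forall>\<^sub>F y in at 0 within S. dist (G1 y) d < e / 3" "\<forall>\<^sub>F y in at 0 within S. dist (G2 y) d < e / 3"
    using g1 g2 \<open>e > 0\<close> unfolding tendsto_iff by (meson divide_pos_pos zero_less_numeral)+
  moreover have "\<forall>\<^sub>F y in at 0 within S. norm (F1 y - F1 0 - d \<bullet> (y - 0)) \<le> e' * norm (y - 0)"
     "\<forall>\<^sub>F y in at 0 within S. norm (F2 y - F2 0 - d \<bullet> (y - 0)) \<le> e' * norm (y - 0)"
    using f1 f2 e' unfolding has_derivative_within_alt2 by blast+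
  ultimately show "\<forall>\<^sub>F y in at 0 within S.
      dist (w y *\<^sub>R G1 y + (1 - w y) *\<^sub>R G2 y + (F1 y - F2 y) *\<^sub>R dw y) d < e"
  proof eventually_elim
    case (elim y)
    have "\<bar>F1 y - F2 y\<bar> \<le> \<bar>F1 y - F1 0 - d \<bullet> y\<bar> + \<bar>F2 y - F2 0 - d \<bullet> y\<bar>"
      using eq by linarith
    also have "\<dots> \<le> 2 * e' * norm y" using elim(3,4) by simp
    finally have "\<bar>F1 y - F2 y\<bar> * norm (dw y) \<le> 2 * e' * norm y * norm (dw y)"
      by (rule mult_right_mono) simp
    also have "\<dots> = 2 * e' * (norm (dw y) * norm y)" by simp
    also have "\<dots> \<le> 2 * e' * B" using B[of y] e' by (intro mult_left_mono) auto
    also have "\<dots> \<le> e / 3" using e B0 by (simp add: e'_def field_simps)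
    finally have small: "\<bar>F1 y - F2 y\<bar> * norm (dw y) \<le> e / 3" .
    have "norm (w y *\<^sub>R (G1 y - d) + (1 - w y) *\<^sub>R (G2 y - d) + (F1 y - F2 y) *\<^sub>R dw y)
       \<le> w y * norm (G1 y - d) + (1 - w y) * norm (G2 y - d) + \<bar>F1 y - F2 y\<bar> * norm (dw y)"
      using w[of y] norm_triangle_ineq[of "w y *\<^sub>R (G1 y - d)" "(1 - w y) *\<^sub>R (G2 y - d)"]
        norm_triangle_ineq[of "w y *\<^sub>R (G1 y - d) + (1 - w y) *\<^sub>R (G2 y - d)" "(F1 y - F2 y) *\<^sub>R dw y"]
      by simp
    also have "\<dots> < w y * (e / 3) + (1 - w y) * (e / 3) + e / 3 + e / 3"
    proof -
      have "w y * norm (G1 y - d) + (1 - w y) * norm (G2 y - d) \<le> w y * (e/3) + (1 - w y) * (e/3)"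
        using elim(1,2) w[of y] by (intro add_mono mult_left_mono) (auto simp: dist_norm less_imp_le)
      then show ?thesis using small e by linarith
    qed
    also have "\<dots> = e" by (simp add: field_simps)
    finally show ?case by (simp add: dist_norm algebra_simps)
  qed
qed

section \<open>Hestenes reflections into the bowtie\<close>

lemma inner_real2: "(x::real^2) \<bullet> y = x$1 * y$1 + x$2 * y$2"
  by (simp add: inner_vec_def sum_2)

lemma norm_le_1_iff_real2: "norm (x::real^2) \<le> 1 \<longleftrightarrow> x$1^2 + x$2^2 \<le> 1"
proof -
  have "norm x ^ 2 = x \<bullet> x" by (rule power2_norm_eq_inner)
  also have "\<dots> = x$1^2 + x$2^2" by (simp add: inner_real2 power2_eq_square)
  finally show ?thesis by (metis abs_norm_cancel abs_square_le_1)
qed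

definition bowtie :: "(real^2) set" where
  "bowtie = {x. norm x \<le> 1 \<and> 0 \<le> x$1 * x$2}"

definition bowtie_gap :: "(real^2) set" where
  "bowtie_gap = {x. norm x \<le> 1 \<and> x$1 * x$2 \<le> 0}"

lemma closed_bowtie: "closed bowtie"
  unfolding bowtie_def by (intro closed_Collect_conj closed_Collect_le continuous_intros)

lemma closed_bowtie_gap: "closed bowtie_gap"
  unfolding bowtie_gap_def by (intro closed_Collect_conj closed_Collect_le continuous_intros)

lemma bowtie_Un_gap: "bowtie \<union> bowtie_gap = cball 0 1"
  by (auto simp: bowtie_def bowtie_gap_def)

definition mirror :: "'n \<Rightarrow> real^'n \<Rightarrow> real^'n" where
  "mirror i x = x - (2 * x$i) *\<^sub>R axis i 1"

definition shrink :: "real \<Rightarrow> real" where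
  "shrink s = inverse (1 + 3 * s^2)"

definition shrink' :: "real \<Rightarrow> real" where
  "shrink' s = - 6 * s / (1 + 3 * s^2)^2"

text \<open>The point \<open>x\<close> with \<open>x\<^sub>i\<close> replaced by \<open>-2x\<^sub>i\<close>, then scaled by \<open>shrink x\<^sub>i\<close> to stay in the unit disc.\<close>
definition mirror_shrink :: "'n \<Rightarrow> real^'n \<Rightarrow> real^'n" where
  "mirror_shrink i x = shrink (x$i) *\<^sub>R (x - (3 * x$i) *\<^sub>R axis i 1)"

text \<open>Hestenes' reflection: the coefficients \<open>3, -2\<close> make the value and the normal derivative
  agree with those of \<open>f\<close> on the hyperplane \<open>x\<^sub>i = 0\<close>.\<close>
definition hestenes :: "'n \<Rightarrow> (real^'n \<Rightarrow> real) \<Rightarrow> real^'n \<Rightarrow> real" where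
  "hestenes i f x = 3 * f (mirror i x) - 2 * f (mirror_shrink i x)"

definition hestenes_grad :: "'n \<Rightarrow> (real^'n \<Rightarrow> real^'n) \<Rightarrow> real^'n \<Rightarrow> real^'n" where
  "hestenes_grad i df x = 3 *\<^sub>R (df (mirror i x) - (2 * df (mirror i x) $ i) *\<^sub>R axis i 1)
     - 2 *\<^sub>R ((shrink' (x$i) * (df (mirror_shrink i x) \<bullet> (x - (3 * x$i) *\<^sub>R axis i 1))) *\<^sub>R axis i 1
        + shrink (x$i) *\<^sub>R df (mirror_shrink i x) - (3 * shrink (x$i) * df (mirror_shrink i x) $ i) *\<^sub>R axis i 1)"

lemma shrink_denominator_pos: "0 < 1 + 3 * (s::real)^2"
  by (simp add: add_pos_nonneg)

lemma shrink_denominator_nonzero: "1 + 3 * (s::real)^2 \<noteq> 0"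
  using shrink_denominator_pos[of s] by linarith

lemma mirror_gap: "x \<in> bowtie_gap \<Longrightarrow> mirror i x \<in> bowtie"
  using exhaust_2[of i]
  by (auto simp: bowtie_gap_def bowtie_def mirror_def axis_def norm_le_1_iff_real2 mult_le_0_iff)

lemma mirror_shrink_gap:
  assumes "x \<in> bowtie_gap" shows "mirror_shrink i x \<in> bowtie"
proof -
  have x: "x$1^2 + x$2^2 \<le> 1" "x$1 * x$2 \<le> 0"
    using assms by (auto simp: bowtie_gap_def norm_le_1_iff_real2)
  have disc: "(shrink a)^2 * (4 * a^2 + b^2) \<le> 1" if "a^2 + b^2 \<le> 1" for a b :: real
  proof -
    have "4 * a^2 + b^2 \<le> 1 + 3 * a^2" using that by simp
    also have "\<dots> \<le> (1 + 3 * a^2)^2" by (intro self_le_power) auto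
    finally show ?thesis
      using shrink_denominator_pos[of a] by (simp add: shrink_def power_inverse field_simps)
  qed
  have "0 \<le> -2 * (x$1 * x$2)" using x(2) by simp
  then have nonneg: "0 \<le> s^2 * (-2 * (x$1 * x$2))" for s :: real
    by (rule mult_nonneg_nonneg[OF zero_le_power2])
  show ?thesis
  proof (cases "i = 1")
    case True
    have "(mirror_shrink i x)$1^2 + (mirror_shrink i x)$2^2 = (shrink (x$1))^2 * (4 * (x$1)^2 + (x$2)^2)"
      "(mirror_shrink i x)$1 * (mirror_shrink i x)$2 = (shrink (x$1))^2 * (-2 * (x$1 * x$2))"
      using True by (simp_all add: mirror_shrink_def axis_def power2_eq_square algebra_simps)
    then show ?thesis using disc[of "x$1" "x$2"] x nonneg[of "shrink (x$1)"]
      by (simp add: bowtie_def norm_le_1_iff_real2)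
  next
    case False
    then have "i = 2" using exhaust_2 by blast
    have "(mirror_shrink i x)$1^2 + (mirror_shrink i x)$2^2 = (shrink (x$2))^2 * (4 * (x$2)^2 + (x$1)^2)"
      "(mirror_shrink i x)$1 * (mirror_shrink i x)$2 = (shrink (x$2))^2 * (-2 * (x$1 * x$2))"
      using \<open>i = 2\<close> by (simp_all add: mirror_shrink_def axis_def power2_eq_square algebra_simps)
    then show ?thesis using disc[of "x$2" "x$1"] x nonneg[of "shrink (x$2)"]
      by (simp add: bowtie_def norm_le_1_iff_real2 add.commute)
  qed
qed

lemma has_derivative_vec_nth [derivative_intros]:
  "((\<lambda>x::real^'n. x $ i) has_derivative (\<lambda>v. v $ i)) F"
  by (rule bounded_linear_imp_has_derivative) (rule bounded_linear_vec_nth)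

lemma has_derivative_mirror: "(mirror i has_derivative (\<lambda>v. v - (2 * v$i) *\<^sub>R axis i 1)) F"
  unfolding mirror_def by (auto intro!: derivative_eq_intros)

lemma has_derivative_mirror_shrink:
  "(mirror_shrink i has_derivative
     (\<lambda>v. (shrink' (x$i) * v$i) *\<^sub>R (x - (3 * x$i) *\<^sub>R axis i 1)
        + shrink (x$i) *\<^sub>R (v - (3 * v$i) *\<^sub>R axis i 1))) (at x within S)"
  unfolding mirror_shrink_def shrink_def
  apply (rule has_derivative_eq_rhs)
   apply (rule derivative_eq_intros | simp add: shrink_denominator_nonzero)+
  apply (rule ext)
  using shrink_denominator_pos[of "x$i"]
  apply (simp add: shrink'_def field_simps power2_eq_square)
  done

lemma C1_gradient_on_hestenes:
  assumes f: "C1_gradient_on T f df" and "mirror i ` S \<subseteq> T" "mirror_shrink i ` S \<subseteq> T"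
  shows "C1_gradient_on S (hestenes i f) (hestenes_grad i df)"
  unfolding C1_gradient_on_def
proof (intro conjI ballI)
  have df_cont: "continuous_on T df"
    and f_der: "\<And>y. y \<in> T \<Longrightarrow> (f has_derivative (\<lambda>v. df y \<bullet> v)) (at y within T)"
    using f by (auto simp: C1_gradient_on_def)
  have "continuous_on S (mirror i)" "continuous_on S (mirror_shrink i)"
    unfolding mirror_def mirror_shrink_def shrink_def
    by (intro continuous_intros; simp add: shrink_denominator_nonzero)+
  then have "continuous_on S (\<lambda>x. df (mirror i x))" "continuous_on S (\<lambda>x. df (mirror_shrink i x))"
    using continuous_on_compose2[OF df_cont] assms(2,3) by blast+
  then show "continuous_on S (hestenes_grad i df)"
    unfolding hestenes_grad_def shrink_def shrink'_def
    by (intro continuous_intros) (auto simp: shrink_denominator_nonzero)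
  fix x assume x: "x \<in> S"
  note chain1 = has_derivative_in_compose2[OF f_der assms(2) x has_derivative_mirror]
  note chain2 = has_derivative_in_compose2[OF f_der assms(3) x has_derivative_mirror_shrink]
  have "(hestenes i f has_derivative (\<lambda>v. 3 * (df (mirror i x) \<bullet> (v - (2 * v $ i) *\<^sub>R axis i 1))
     - 2 * (df (mirror_shrink i x) \<bullet> ((shrink' (x$i) * v$i) *\<^sub>R (x - (3 * x$i) *\<^sub>R axis i 1)
        + shrink (x$i) *\<^sub>R (v - (3 * v$i) *\<^sub>R axis i 1))))) (at x within S)"
    unfolding hestenes_def by (intro derivative_intros chain1 chain2)
  then show "(hestenes i f has_derivative (\<lambda>v. hestenes_grad i df x \<bullet> v)) (at x within S)"
    by (simp add: hestenes_grad_def inner_diff_left inner_diff_right inner_add_left inner_add_right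
        inner_axis inner_axis' algebra_simps)
qed

lemma hestenes_on_hyperplane:
  assumes "x$i = 0"
  shows "hestenes i f x = f x" "hestenes_grad i df x = df x"
  using assms by (auto simp: mirror_def mirror_shrink_def shrink_def shrink'_def hestenes_def hestenes_grad_def
      vec_eq_iff axis_def algebra_simps)

text \<open>\<open>sin_sq x\<close> is \<open>sin\<^sup>2\<close> of the polar angle of \<open>x\<close> (and \<open>0\<close> at the origin); \<open>cutoff\<close> composes
  it with \<open>3u\<^sup>2 - 2u\<^sup>3\<close>, which has vanishing derivative at \<open>u = 0\<close> and \<open>u = 1\<close>.\<close>
definition sin_sq :: "real^2 \<Rightarrow> real" where
  "sin_sq x = (x$2)^2 / (x \<bullet> x)"

definition sin_sq_grad :: "real^2 \<Rightarrow> real^2" where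
  "sin_sq_grad x = (2 * x$2 / (x \<bullet> x)) *\<^sub>R axis 2 1 - (2 * (x$2)^2 / (x \<bullet> x)^2) *\<^sub>R x"

definition cutoff :: "real^2 \<Rightarrow> real" where
  "cutoff x = 3 * (sin_sq x)^2 - 2 * (sin_sq x)^3"

definition cutoff_grad :: "real^2 \<Rightarrow> real^2" where
  "cutoff_grad x = (6 * sin_sq x - 6 * (sin_sq x)^2) *\<^sub>R sin_sq_grad x"

lemma sin_sq_bounds: "0 \<le> sin_sq x" "sin_sq x \<le> 1"
proof -
  have "(x$2)^2 \<le> x \<bullet> x" by (simp add: inner_real2 power2_eq_square)
  then show "0 \<le> sin_sq x" "sin_sq x \<le> 1"
    unfolding sin_sq_def by (auto simp: divide_le_eq_1 less_le)
qed

lemma cutoff_bounds: "0 \<le> cutoff x" "cutoff x \<le> 1"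
proof -
  have u: "0 \<le> sin_sq x" "sin_sq x \<le> 1" by (rule sin_sq_bounds)+
  have "cutoff x = (sin_sq x)^2 * (3 - 2 * sin_sq x)"
    "1 - cutoff x = (1 - sin_sq x)^2 * (1 + 2 * sin_sq x)"
    by (simp_all add: cutoff_def algebra_simps power2_eq_square power3_eq_cube)
  moreover have "0 \<le> (sin_sq x)^2 * (3 - 2 * sin_sq x)" "0 \<le> (1 - sin_sq x)^2 * (1 + 2 * sin_sq x)"
    using u by simp_all
  ultimately show "0 \<le> cutoff x" "cutoff x \<le> 1" by simp_all
qed

lemma has_derivative_sin_sq:
  assumes "x \<noteq> 0" shows "(sin_sq has_derivative (\<lambda>v. sin_sq_grad x \<bullet> v)) (at x)"
proof -
  have xx: "x \<bullet> x \<noteq> 0" using assms by simp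
  show ?thesis unfolding sin_sq_def
    apply (rule has_derivative_eq_rhs)
     apply (rule derivative_eq_intros | simp add: xx assms)+
    apply (rule ext)
    subgoal for h using xx inner_commute[of h x]
      by (simp add: sin_sq_grad_def inner_diff_left inner_axis' field_simps power2_eq_square)
    done
qed

lemma has_derivative_cutoff:
  assumes "x \<noteq> 0" shows "(cutoff has_derivative (\<lambda>v. cutoff_grad x \<bullet> v)) (at x)"
  unfolding cutoff_def
  apply (rule has_derivative_eq_rhs)
   apply (rule derivative_eq_intros has_derivative_sin_sq[OF assms] | simp)+
  apply (rule ext)
  apply (simp add: cutoff_grad_def algebra_simps power2_eq_square power3_eq_cube)
  done

lemma continuous_on_cutoff_grad: "continuous_on (- {0}) cutoff_grad"
  unfolding cutoff_grad_def sin_sq_grad_def sin_sq_def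
  by (intro continuous_intros) auto

lemma cutoff_vertical_axis:
  assumes "x$1 = 0" "x \<noteq> 0" shows "cutoff x = 1" "cutoff_grad x = 0"
proof -
  have "x$2 \<noteq> 0" using assms by (auto simp: vec_eq_iff forall_2)
  moreover have "x \<bullet> x = (x$2)^2" using assms by (simp add: inner_real2 power2_eq_square)
  ultimately have "sin_sq x = 1" by (simp add: sin_sq_def)
  then show "cutoff x = 1" "cutoff_grad x = 0" by (auto simp: cutoff_def cutoff_grad_def)
qed

lemma cutoff_horizontal_axis:
  assumes "x$2 = 0" shows "cutoff x = 0" "cutoff_grad x = 0"
  using assms by (auto simp: cutoff_def cutoff_grad_def sin_sq_def)

lemma norm_cutoff_grad_mult_norm_le: "norm (cutoff_grad x) * norm x \<le> 24"
proof (cases "x = 0")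
  case False
  let ?r = "norm x"
  have r: "0 < ?r" using False by simp
  have xx: "x \<bullet> x = ?r^2" by (simp add: power2_norm_eq_inner)
  have c2: "\<bar>x$2\<bar> \<le> ?r" by (rule component_le_norm_cart)
  then have c2': "(x$2)^2 \<le> ?r^2" by (metis abs_le_square_iff abs_norm_cancel)
  have "norm (sin_sq_grad x) \<le> norm ((2 * x$2 / (x \<bullet> x)) *\<^sub>R (axis 2 1 :: real^2))
      + norm ((2 * (x$2)^2 / (x \<bullet> x)^2) *\<^sub>R x)"
    unfolding sin_sq_grad_def by (rule norm_triangle_ineq4)
  also have "\<dots> = 2 * \<bar>x$2\<bar> / ?r^2 + 2 * (x$2)^2 / ?r^4 * ?r"
    by (simp add: xx abs_mult flip: power_mult)
  also have "\<dots> \<le> 2 * ?r / ?r^2 + 2 * ?r^2 / ?r^4 * ?r"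
    using c2 c2' r by (intro add_mono mult_right_mono divide_right_mono) auto
  also have "\<dots> = 4 / ?r" using r by (simp add: field_simps power2_eq_square power4_eq_xxxx)
  finally have grad: "norm (sin_sq_grad x) * ?r \<le> 4" using r by (simp add: field_simps)
  have "\<bar>6 * sin_sq x - 6 * (sin_sq x)^2\<bar> \<le> 6"
  proof -
    have "6 * sin_sq x - 6 * (sin_sq x)^2 = 6 * (sin_sq x * (1 - sin_sq x))"
      by (simp add: algebra_simps power2_eq_square)
    moreover have "0 \<le> sin_sq x * (1 - sin_sq x)" "sin_sq x * (1 - sin_sq x) \<le> 1"
      using sin_sq_bounds[of x] by (auto intro: mult_le_one)
    ultimately show ?thesis by simp
  qed
  then have "\<bar>6 * sin_sq x - 6 * (sin_sq x)^2\<bar> * (norm (sin_sq_grad x) * ?r) \<le> 6 * 4"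
    using grad by (intro mult_mono) auto
  then show ?thesis by (simp add: cutoff_grad_def)
qed simp

section \<open>Extension from the bowtie\<close>

text \<open>In the gap the two Hestenes reflections are blended by the cutoff, which equals \<open>1\<close> on the
  vertical and \<open>0\<close> on the horizontal axis; each reflection is exact on its own axis.\<close>
definition blend :: "(real^2 \<Rightarrow> real) \<Rightarrow> real^2 \<Rightarrow> real" where
  "blend f x = cutoff x * hestenes 1 f x + (1 - cutoff x) * hestenes 2 f x"

definition blend_grad :: "(real^2 \<Rightarrow> real) \<Rightarrow> (real^2 \<Rightarrow> real^2) \<Rightarrow> real^2 \<Rightarrow> real^2" where
  "blend_grad f df x = (if x = 0 then df 0 else
     cutoff x *\<^sub>R hestenes_grad 1 df x + (1 - cutoff x) *\<^sub>R hestenes_grad 2 df x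
       + (hestenes 1 f x - hestenes 2 f x) *\<^sub>R cutoff_grad x)"

lemma blend_on_axes:
  assumes "x$1 * x$2 = 0"
  shows "blend f x = f x" "blend_grad f df x = df x"
proof -
  consider "x = 0" | "x \<noteq> 0" "x$1 = 0" | "x$2 = 0"
    using assms by (cases "x = 0") auto
  then have "blend f x = f x \<and> blend_grad f df x = df x"
  proof cases
    case 1
    then show ?thesis by (simp add: blend_def blend_grad_def hestenes_on_hyperplane algebra_simps)
  next
    case 2
    then show ?thesis
      using hestenes_on_hyperplane[of x 1] cutoff_vertical_axis[of x] by (simp add: blend_def blend_grad_def)
  next
    case 3
    then show ?thesis
      using hestenes_on_hyperplane[of x 2] cutoff_horizontal_axis[of x]
      by (auto simp: blend_def blend_grad_def)
  qed
  then show "blend f x = f x" "blend_grad f df x = df x" by simp_all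
qed

lemma C1_gradient_on_hestenes_gap:
  "C1_gradient_on bowtie f df \<Longrightarrow> C1_gradient_on bowtie_gap (hestenes i f) (hestenes_grad i df)"
  by (rule C1_gradient_on_hestenes) (use mirror_gap mirror_shrink_gap in auto)

lemma has_derivative_blend:
  assumes f: "C1_gradient_on bowtie f df" and x: "x \<in> bowtie_gap"
  shows "(blend f has_derivative (\<lambda>v. blend_grad f df x \<bullet> v)) (at x within bowtie_gap)"
proof -
  have H_der: "(hestenes i f has_derivative (\<lambda>v. hestenes_grad i df y \<bullet> v)) (at y within bowtie_gap)"
    if "y \<in> bowtie_gap" for i y
    using C1_gradient_on_hestenes_gap[OF f] that by (simp add: C1_gradient_on_def)
  show ?thesis
  proof (cases "x = 0")
    case True
    have "((\<lambda>y. cutoff y * hestenes 1 f y + (1 - cutoff y) * hestenes 2 f y) has_derivative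
        (\<lambda>v. df 0 \<bullet> v)) (at 0 within bowtie_gap)"
      using H_der[OF x, of 1] H_der[OF x, of 2] True
      by (intro has_derivative_convex_combination) (auto simp: hestenes_on_hyperplane cutoff_bounds)
    then show ?thesis using True by (simp add: blend_def[abs_def] blend_grad_def)
  next
    case False
    have "(cutoff has_derivative (\<lambda>v. cutoff_grad x \<bullet> v)) (at x within bowtie_gap)"
      using has_derivative_cutoff[OF False] by (rule has_derivative_at_withinI)
    then have "(blend f has_derivative (\<lambda>v. cutoff x * (hestenes_grad 1 df x \<bullet> v)
        + (cutoff_grad x \<bullet> v) * hestenes 1 f x
        + ((1 - cutoff x) * (hestenes_grad 2 df x \<bullet> v) + (0 - cutoff_grad x \<bullet> v) * hestenes 2 f x)))
        (at x within bowtie_gap)"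
      unfolding blend_def[abs_def]
      by (intro has_derivative_add has_derivative_mult has_derivative_diff H_der x has_derivative_const)
    then show ?thesis using False by (simp add: blend_grad_def inner_add_left algebra_simps)
  qed
qed

lemma continuous_blend_grad:
  assumes f: "C1_gradient_on bowtie f df" and x: "x \<in> bowtie_gap"
  shows "continuous (at x within bowtie_gap) (blend_grad f df)"
proof -
  have H_der: "(hestenes i f has_derivative (\<lambda>v. hestenes_grad i df y \<bullet> v)) (at y within bowtie_gap)"
    if "y \<in> bowtie_gap" for i y
    using C1_gradient_on_hestenes_gap[OF f] that by (simp add: C1_gradient_on_def)
  have H_cont: "continuous_on bowtie_gap (hestenes_grad i df)" for i
    using C1_gradient_on_hestenes_gap[OF f] by (simp add: C1_gradient_on_def)
  let ?G = "\<lambda>y. cutoff y *\<^sub>R hestenes_grad 1 df y + (1 - cutoff y) *\<^sub>R hestenes_grad 2 df y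
      + (hestenes 1 f y - hestenes 2 f y) *\<^sub>R cutoff_grad y"
  show ?thesis
  proof (cases "x = 0")
    case True
    have "(hestenes_grad i df \<longlongrightarrow> df 0) (at 0 within bowtie_gap)" for i
      using H_cont[of i] x True by (auto simp: continuous_on_def hestenes_on_hyperplane)
    then have "(?G \<longlongrightarrow> df 0) (at 0 within bowtie_gap)"
      using H_der[OF x, of 1] H_der[OF x, of 2] True
      by (intro tendsto_blended_gradient[where B=24])
        (auto simp: hestenes_on_hyperplane cutoff_bounds norm_cutoff_grad_mult_norm_le)
    then have "(blend_grad f df \<longlongrightarrow> df 0) (at 0 within bowtie_gap)"
      by (rule Lim_transform_within[where d=1]) (auto simp: blend_grad_def)
    then show ?thesis using True by (simp add: continuous_within blend_grad_def)
  next
    case False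
    have "continuous (at x within bowtie_gap) cutoff"
      using has_derivative_continuous[OF has_derivative_cutoff[OF False]]
      by (rule continuous_at_imp_continuous_at_within)
    moreover have "isCont cutoff_grad x"
      using continuous_on_cutoff_grad False by (simp add: continuous_on_eq_continuous_at open_Compl)
    then have "continuous (at x within bowtie_gap) cutoff_grad"
      by (rule continuous_at_imp_continuous_at_within)
    moreover have "continuous (at x within bowtie_gap) (hestenes_grad i df)" for i
      using H_cont x by (meson continuous_on_eq_continuous_within)
    moreover have "continuous (at x within bowtie_gap) (hestenes i f)" for i
      using H_der x has_derivative_continuous by blast
    ultimately have "continuous (at x within bowtie_gap) ?G"
      by (intro continuous_intros) auto
    then show ?thesis
      by (rule continuous_transform_within[where \<delta> = "norm x"])
        (use False x in \<open>auto simp: blend_grad_def dist_norm\<close>)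
  qed
qed

lemma C1_gradient_on_blend:
  "C1_gradient_on bowtie f df \<Longrightarrow> C1_gradient_on bowtie_gap (blend f) (blend_grad f df)"
  by (simp add: C1_gradient_on_def continuous_on_eq_continuous_within has_derivative_blend
      continuous_blend_grad)

lemma C1_on_bowtie_imp_C1_ext:
  assumes "C1_on bowtie f" shows "C1_ext bowtie f"
proof -
  obtain df where f: "C1_gradient_on bowtie f df"
    using assms by (auto simp: C1_on_iff_C1_gradient_on)
  define h where "h x = (if x \<in> bowtie then f x else blend f x)" for x
  define dh where "dh x = (if x \<in> bowtie then df x else blend_grad f df x)" for x
  have "C1_gradient_on bowtie h dh"
    by (rule C1_gradient_on_cong[OF f]) (auto simp: h_def dh_def)
  moreover have "C1_gradient_on bowtie_gap h dh"
    by (rule C1_gradient_on_cong[OF C1_gradient_on_blend[OF f]])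
      (auto simp: h_def dh_def bowtie_def bowtie_gap_def blend_on_axes)
  ultimately have "C1_gradient_on (cball 0 1) h dh"
    using closed_bowtie closed_bowtie_gap by (metis C1_gradient_on_closed_Un bowtie_Un_gap)
  then obtain g dg where "C1_gradient_on UNIV g dg" "\<forall>x\<in>cball 0 1. g x = h x"
    using C1_gradient_on_extend_from_unit_ball by blast
  moreover have "bowtie \<subseteq> cball 0 1" using bowtie_Un_gap by blast
  ultimately show ?thesis
    unfolding C1_ext_iff_C1_gradient_on_UNIV by (intro exI[of _ g] exI[of _ dg]) (auto simp: h_def)
qed

lemma compact_bowtie: "compact bowtie"
proof -
  have "bowtie \<subseteq> cball 0 1" using bowtie_Un_gap by blast
  then show ?thesis
    using closed_bowtie by (metis bounded_cball bounded_subset compact_eq_bounded_closed)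
qed

definition quarter_disc :: "real \<Rightarrow> (real^2) set" where
  "quarter_disc s = {x. norm x \<le> 1 \<and> 0 \<le> s * x$1 \<and> 0 \<le> s * x$2}"

lemma bowtie_eq_quarter_discs: "bowtie = quarter_disc 1 \<union> quarter_disc (-1)"
  by (auto simp: bowtie_def quarter_disc_def zero_le_mult_iff)

lemma closed_quarter_disc: "closed (quarter_disc s)"
  unfolding quarter_disc_def by (intro closed_Collect_conj closed_Collect_le continuous_intros)

lemma convex_quarter_disc: "convex (quarter_disc s)"
proof -
  have "quarter_disc s = cball 0 1 \<inter> {x. 0 \<le> s * x$1} \<inter> {x. 0 \<le> s * x$2}"
    by (auto simp: quarter_disc_def)
  moreover have "convex {x::real^2. 0 \<le> s * x$i}" for i
    unfolding convex_def by (auto simp: algebra_simps)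
  ultimately show ?thesis by (metis convex_Int convex_cball)
qed

lemma connected_bowtie: "connected bowtie"
  unfolding bowtie_eq_quarter_discs
proof (intro connected_Un convex_connected convex_quarter_disc)
  have "0 \<in> quarter_disc 1 \<inter> quarter_disc (-1)" by (simp add: quarter_disc_def)
  then show "quarter_disc 1 \<inter> quarter_disc (-1) \<noteq> {}" by blast
qed

lemma diagonal_point_in_interior_quarter_disc:
  assumes "s \<noteq> 0" "\<bar>s\<bar> \<le> 1"
  shows "(s / 4) *\<^sub>R (axis 1 1 + axis 2 1) \<in> interior (quarter_disc s)"
proof (rule interior_maximal[THEN subsetD])
  let ?U = "{x::real^2. norm x < 1 \<and> 0 < s * x$1 \<and> 0 < s * x$2}"
  show "open ?U" by (intro open_Collect_conj open_Collect_less continuous_intros)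
  show "?U \<subseteq> quarter_disc s" by (auto simp: quarter_disc_def)
  have "norm (axis 1 1 + axis 2 1 :: real^2) \<le> 2"
    using norm_triangle_ineq[of "axis 1 1 :: real^2" "axis 2 1"] by simp
  then have "norm ((s / 4) *\<^sub>R (axis 1 1 + axis 2 1 :: real^2)) \<le> 1 / 2"
    using assms(2) mult_mono[of "\<bar>s\<bar>" 1 "norm (axis 1 1 + axis 2 1 :: real^2)" 2] by simp
  then show "(s / 4) *\<^sub>R (axis 1 1 + axis 2 1) \<in> ?U"
    using assms(1) by (auto simp: axis_def zero_less_mult_iff linorder_neq_iff)
qed

lemma not_connected_interior_bowtie: "\<not> connected (interior bowtie)"
proof
  assume "connected (interior bowtie)"
  let ?d = "axis 1 1 + axis 2 1 :: real^2"
  have diagonal: "(s / 4) *\<^sub>R ?d \<in> interior bowtie" if "s = 1 \<or> s = -1" for s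
    using diagonal_point_in_interior_quarter_disc[of s] that
      interior_mono[of "quarter_disc s" bowtie] by (auto simp: bowtie_eq_quarter_discs)
  have "?d \<bullet> ?d = 2" by (simp add: inner_axis_axis inner_add_left inner_add_right)
  then obtain z where z: "z \<in> interior bowtie" "?d \<bullet> z = 0"
    using connected_ivt_hyperplane[OF \<open>connected (interior bowtie)\<close> diagonal diagonal, of "-1" 1 ?d 0]
    by auto
  then have "z \<in> bowtie" using interior_subset by blast
  with z(2) have "z = 0"
    by (auto simp: bowtie_def inner_add_left inner_axis' vec_eq_iff forall_2 zero_le_mult_iff)
  moreover have "0 \<notin> interior bowtie"
  proof
    assume "0 \<in> interior bowtie"
    then obtain e where "e > 0" "ball 0 e \<subseteq> bowtie" by (meson mem_interior)
    define p where "p = (e / 4) *\<^sub>R (axis 1 1 - axis 2 1 :: real^2)"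
    have "norm p < e"
      using \<open>e > 0\<close> norm_triangle_ineq4[of "axis 1 1 :: real^2" "axis 2 1"] by (simp add: p_def)
    then have "p \<in> bowtie" using \<open>ball 0 e \<subseteq> bowtie\<close> by auto
    moreover have "p$1 * p$2 < 0" using \<open>e > 0\<close> by (simp add: p_def axis_def)
    ultimately show False by (simp add: bowtie_def)
  qed
  ultimately show False using z(1) by simp
qed

theorem mainTheorem15:
  shows "\<exists>K :: (real^2) set. topologically_regular K \<and> compact K \<and> connected K \<and>
           \<not> whitney_regular (interior K) \<and>
           (\<forall>f. C1_int K f \<longleftrightarrow> C1_on K f) \<and> (\<forall>f. C1_on K f \<longleftrightarrow> C1_ext K f)"
proof (intro exI[of _ bowtie] conjI allI iffI)
  have interiors: "interior (quarter_disc 1) \<noteq> {}" "interior (quarter_disc (-1)) \<noteq> {}"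
    using diagonal_point_in_interior_quarter_disc[of 1] diagonal_point_in_interior_quarter_disc[of "-1"]
    by auto
  note quarters = convex_quarter_disc convex_quarter_disc closed_quarter_disc closed_quarter_disc interiors
  show "topologically_regular bowtie"
    unfolding bowtie_eq_quarter_discs by (rule topologically_regular_convex_Un[OF quarters])
  show "compact bowtie" by (rule compact_bowtie)
  show "connected bowtie" by (rule connected_bowtie)
  show "\<not> whitney_regular (interior bowtie)"
    using not_connected_interior_bowtie whitney_regular_imp_connected by blast
  fix f
  show "C1_int bowtie f" if "C1_on bowtie f" using that by (rule C1_on_imp_C1_int)
  show "C1_on bowtie f" if "C1_int bowtie f"
    using that unfolding bowtie_eq_quarter_discs by (rule C1_int_imp_C1_on_convex_Un[OF quarters])
  show "C1_ext bowtie f" if "C1_on bowtie f" using that by (rule C1_on_bowtie_imp_C1_ext)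
  show "C1_on bowtie f" if "C1_ext bowtie f" using that by (rule C1_ext_imp_C1_on)
qed

end
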